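(* Let $(L,\preceq)$ be a lattice and $\delta$ a local congruence on $L$. If two equivalence classes $[x]_\delta,[y]_\delta\in L/\delta$ satisfy $[x]_\delta\preceq_\delta[y]_\delta$ and $[y]_\delta\preceq_\delta[x]_\delta$ with $x_1\preceq y_1$ and $y_2\preceq x_2$ for some $x_1,x_2\in[x]_\delta$ and $y_1,y_2\in[y]_\delta$, then $[x]_\delta=[y]_\delta$.
   Context: For an equivalence relation $\delta$ on $L$, $[a]_\delta$ is the class of $a$ and $L/\delta$ the set of classes. A local congruence on a lattice $(L,\preceq)$ is an equivalence relation each of whose classes is a sublattice of $L$ and is convex (if $u,v$ are in the class and $u\preceq w\preceq v$, then $w$ is in the class). A $\delta$-sequence from $p_0$ to $p_n$ is a finite sequence $(p_0,p_1,\dots,p_n)$ of elements of $L$ with $n\ge1$ such that for each $i\in\{1,\dots,n\}$ either $(p_{i-1},p_i)\in\delta$ or $p_{i-1}\preceq p_i$. The relation $\preceq_\delta$ on $L/\delta$ is defined by $[x]_\delta\preceq_\delta[y]_\delta$ iff there exists a $\delta$-sequence from some $x'\in[x]_\delta$ to some $y'\in[y]_\delta$. *)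

theory Defs
  imports Main
begin

definition local_congruence :: "('a::lattice) rel \<Rightarrow> bool" where
  "local_congruence \<delta> \<longleftrightarrow>
     equiv UNIV \<delta>
     \<and> (\<forall>a. \<forall>u\<in>\<delta> `` {a}. \<forall>v\<in>\<delta> `` {a}. inf u v \<in> \<delta> `` {a} \<and> sup u v \<in> \<delta> `` {a})
     \<and> (\<forall>a u v w. u \<in> \<delta> `` {a} \<and> v \<in> \<delta> `` {a} \<and> u \<le> w \<and> w \<le> v \<longrightarrow> w \<in> \<delta> `` {a})"

text \<open>A delta-sequence (p_0,...,p_n), n \<ge> 1, represented as a list of length n+1.\<close>
definition delta_seq :: "('a::order) rel \<Rightarrow> 'a list \<Rightarrow> bool" where
  "delta_seq \<delta> ps \<longleftrightarrow> 2 \<le> length ps \<and>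
     (\<forall>i. 1 \<le> i \<and> i < length ps \<longrightarrow> (ps ! (i - 1), ps ! i) \<in> \<delta> \<or> ps ! (i - 1) \<le> ps ! i)"

definition class_le :: "('a::order) rel \<Rightarrow> 'a set \<Rightarrow> 'a set \<Rightarrow> bool" where
  "class_le \<delta> X Y \<longleftrightarrow>
     (\<exists>x'\<in>X. \<exists>y'\<in>Y. \<exists>ps. delta_seq \<delta> ps \<and> hd ps = x' \<and> last ps = y')"

end

(* The element z = x1 \<squnion> y2 lies in both classes: x1 \<le> z \<le> x1 \<squnion> x2 places it in
   [x] by convexity, and y2 \<le> z \<le> y1 \<squnion> y2 places it in [y]. Two classes of an
   equivalence relation that meet coincide. *)
theory Submission
  imports Defs
begin

lemma local_congruence_equiv: "local_congruence \<delta> \<Longrightarrow> equiv UNIV \<delta>"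
  unfolding local_congruence_def by blast

lemma local_congruence_class_sup_closed:
  "local_congruence \<delta> \<Longrightarrow> u \<in> \<delta> `` {a} \<Longrightarrow> v \<in> \<delta> `` {a} \<Longrightarrow> sup u v \<in> \<delta> `` {a}"
  unfolding local_congruence_def by blast

lemma local_congruence_class_convex:
  "local_congruence \<delta> \<Longrightarrow> u \<in> \<delta> `` {a} \<Longrightarrow> v \<in> \<delta> `` {a} \<Longrightarrow> u \<le> w \<Longrightarrow> w \<le> v
    \<Longrightarrow> w \<in> \<delta> `` {a}"
  unfolding local_congruence_def by blast

lemma local_congruence_class_sup_below_mem:
  assumes "local_congruence \<delta>" "u \<in> \<delta> `` {a}" "v \<in> \<delta> `` {a}" "w \<le> v"
  shows "sup u w \<in> \<delta> `` {a}"
proof (rule local_congruence_class_convex[OF assms(1,2)])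
  show "sup u v \<in> \<delta> `` {a}"
    using local_congruence_class_sup_closed[OF assms(1-3)] .
  show "u \<le> sup u w" by simp
  show "sup u w \<le> sup u v" using \<open>w \<le> v\<close> by (simp add: sup.coboundedI2)
qed

theorem corollary4p6:
  fixes \<delta> :: "('a::lattice) rel" and x y x1 x2 y1 y2 :: 'a
  assumes "local_congruence \<delta>"
    and "class_le \<delta> (\<delta> `` {x}) (\<delta> `` {y})"
    and "class_le \<delta> (\<delta> `` {y}) (\<delta> `` {x})"
    and "x1 \<in> \<delta> `` {x}" and "x2 \<in> \<delta> `` {x}"
    and "y1 \<in> \<delta> `` {y}" and "y2 \<in> \<delta> `` {y}"
    and "x1 \<le> y1" and "y2 \<le> x2"
  shows "\<delta> `` {x} = \<delta> `` {y}"
proof -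
  have equiv: "equiv UNIV \<delta>"
    using assms(1) by (rule local_congruence_equiv)
  have "sup x1 y2 \<in> \<delta> `` {x}"
    using local_congruence_class_sup_below_mem[OF assms(1,4,5,9)] .
  moreover have "sup x1 y2 \<in> \<delta> `` {y}"
    using local_congruence_class_sup_below_mem[OF assms(1,7,6,8)] by (simp add: sup_commute)
  ultimately have "(x, y) \<in> \<delta>"
    using equiv_class_nondisjoint[OF equiv] by blast
  then show ?thesis
    by (rule equiv_class_eq[OF equiv])
qed

end
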